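(* Let $n \ge 1$ be an integer and let $t \in \overline{D}(1+2^{2n-1}, 2^{-2n})$. Let $z \in \mathbb{C}_2$ satisfy $|z + \tfrac12| = 2^k$, where $k$ is a real number with $-2n < k < 1$. Then $|f_t(z) + \tfrac12| = 2^{k+2}$.
   Context: Let $|\cdot|$ denote the $2$-adic absolute value on $\mathbb{C}_2$, normalized by $|2| = 1/2$. The notation $\overline{D}(a,\delta)$ denotes the closed disk $\{z \in \mathbb{C}_2 : |z-a| \le \delta\}$. For $t \in \mathbb{C}_2$, let $f_t(z) = -\tfrac32 t(-2z^3+3z^2)+1$. *)

theory Defs
  imports Complex_Main "HOL-Computational_Algebra.Polynomial"
begin

definition nonarch_absval :: "('a::field \<Rightarrow> real) \<Rightarrow> bool" where
  "nonarch_absval N \<longleftrightarrow>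
     (\<forall>x. 0 \<le> N x) \<and> (\<forall>x. N x = 0 \<longleftrightarrow> x = 0) \<and>
     (\<forall>x y. N (x * y) = N x * N y) \<and>
     (\<forall>x y. N (x + y) \<le> max (N x) (N y))"

text \<open>Abstract model of (C_2, |.|): an algebraically closed field, complete with respect to a
  non-archimedean absolute value normalized by |2| = 1/2 (so it restricts to the 2-adic
  absolute value on the rationals).\<close>
definition C2_like :: "('a::field \<Rightarrow> real) \<Rightarrow> bool" where
  "C2_like N \<longleftrightarrow>
     nonarch_absval N \<and> N 2 = 1/2 \<and>
     (\<forall>p :: 'a poly. 0 < degree p \<longrightarrow> (\<exists>z. poly p z = 0)) \<and>
     (\<forall>X :: nat \<Rightarrow> 'a. (\<forall>e>0. \<exists>M. \<forall>m\<ge>M. \<forall>n\<ge>M. N (X m - X n) < e)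
        \<longrightarrow> (\<exists>L. \<forall>e>0. \<exists>M. \<forall>n\<ge>M. N (X n - L) < e))"

definition f_map :: "'a::field \<Rightarrow> 'a \<Rightarrow> 'a" where
  "f_map t z = - (3/2) * t * (- 2 * z ^ 3 + 3 * z ^ 2) + 1"

end

theory Submission
  imports Defs
begin

text \<open>Write \<open>w = z + 1/2\<close>. Then
  \<open>f\<^sub>t(z) + 1/2 = 3/2 \<cdot> ((1 - t) + t w (9/2 - 6w + 2w\<^sup>2))\<close>.
  For \<open>|w| < 2\<close> the quadratic factor has absolute value exactly \<open>|9/2| = 2\<close>, and the hypothesis
  on \<open>t\<close> gives \<open>|t| = 1\<close> and \<open>|1 - t| = 2^(1-2n) < 2|w|\<close>. By the strict triangle equality the
  sum has absolute value \<open>2|w|\<close>, and multiplying by \<open>|3/2| = 2\<close> gives \<open>4|w| = 2^(k+2)\<close>.\<close>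

lemma nonarch_absval_mult: "nonarch_absval N \<Longrightarrow> N (x * y) = N x * N y"
  and nonarch_absval_nonneg: "nonarch_absval N \<Longrightarrow> 0 \<le> N x"
  and nonarch_absval_eq_0_iff: "nonarch_absval N \<Longrightarrow> N x = 0 \<longleftrightarrow> x = 0"
  and nonarch_absval_add_le: "nonarch_absval N \<Longrightarrow> N (x + y) \<le> max (N x) (N y)"
  unfolding nonarch_absval_def by blast+

lemma nonarch_absval_one:
  assumes "nonarch_absval N"
  shows "N 1 = 1"
proof -
  have "N 1 * N 1 = N 1 * 1"
    using nonarch_absval_mult[OF assms, of 1 1] by simp
  moreover have "N 1 \<noteq> 0"
    using nonarch_absval_eq_0_iff[OF assms, of 1] by simp
  ultimately show ?thesis
    by simp
qed

lemma nonarch_absval_minus: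
  assumes "nonarch_absval N"
  shows "N (- x) = N x"
proof -
  have "N (-1) * N (-1) = 1"
    using nonarch_absval_mult[OF assms, of "-1" "-1"] nonarch_absval_one[OF assms] by simp
  with nonarch_absval_nonneg[OF assms] have "N (-1) = 1"
    by (metis abs_of_nonneg power2_eq_square real_sqrt_abs real_sqrt_one)
  then show ?thesis
    using nonarch_absval_mult[OF assms, of "-1" x] by simp
qed

lemma nonarch_absval_power:
  assumes "nonarch_absval N"
  shows "N (x ^ m) = N x ^ m"
  by (induction m) (simp_all add: nonarch_absval_one[OF assms] nonarch_absval_mult[OF assms])

lemma nonarch_absval_add_eq_right:
  assumes "nonarch_absval N" and "N x < N y"
  shows "N (x + y) = N y"
proof -
  have "N (x + y) \<le> N y"
    using nonarch_absval_add_le[OF assms(1), of x y] assms(2) by simp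
  moreover have "N y \<le> max (N (x + y)) (N (- x))"
    using nonarch_absval_add_le[OF assms(1), of "x + y" "- x"] by simp
  ultimately show ?thesis
    using nonarch_absval_minus[OF assms(1), of x] assms(2) by linarith
qed

lemma nonarch_absval_near_one:
  assumes "nonarch_absval N" and "N (t - (1 + d)) < N d" and "N d < 1"
  shows "N (1 - t) = N d" and "N t = 1"
proof -
  have "N (t - 1) = N d"
    using nonarch_absval_add_eq_right[OF assms(1,2)] by (simp add: algebra_simps)
  then show "N (1 - t) = N d"
    using nonarch_absval_minus[OF assms(1), of "t - 1"] by simp
  show "N t = 1"
    using nonarch_absval_add_eq_right[OF assms(1), of "t - 1" 1] \<open>N (t - 1) = N d\<close> assms(3)
      nonarch_absval_one[OF assms(1)] by simp
qed

lemma f_map_plus_half_eq: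
  fixes t z :: "'a::field"
  assumes "(2::'a) \<noteq> 0"
  shows "f_map t z + 1/2 =
    3/2 * ((1 - t) + t * (z + 1/2) * (9/2 - 6 * (z + 1/2) + 2 * (z + 1/2)^2))"
proof -
  define h :: 'a where "h = 1/2"
  have "2 * h = 1"
    unfolding h_def using assms by simp
  then have "- (3 * h) * t * (- 2 * z ^ 3 + 3 * z ^ 2) + 1 + h =
      3 * h * ((1 - t) + t * (z + h) * (9 * h - 6 * (z + h) + 2 * (z + h)^2))"
    by algebra
  moreover have "(3/2::'a) = 3 * h" and "(9/2::'a) = 9 * h"
    unfolding h_def by simp_all
  ultimately show ?thesis
    unfolding f_map_def h_def[symmetric] by (simp only:)
qed

locale two_adic_absval =
  fixes N :: "'a::field \<Rightarrow> real"
  assumes nonarch: "nonarch_absval N"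
    and absval_two: "N 2 = 1/2"
begin

lemmas one = nonarch_absval_one[OF nonarch]
  and mult = nonarch_absval_mult[OF nonarch]
  and minus = nonarch_absval_minus[OF nonarch]
  and power = nonarch_absval_power[OF nonarch]
  and add_le = nonarch_absval_add_le[OF nonarch]
  and add_eq_right = nonarch_absval_add_eq_right[OF nonarch]

lemma two_neq_zero: "(2::'a) \<noteq> 0"
  using absval_two nonarch_absval_eq_0_iff[OF nonarch, of 2] by auto

lemma absval_three: "N 3 = 1"
proof -
  have "N (2 + 1) = N 1"
    using add_eq_right[of 2 1] absval_two one by simp
  then show ?thesis
    using one by simp
qed

lemma absval_half: "N (1/2) = 2"
  using mult[of 2 "1/2"] absval_two two_neq_zero one by simp

lemma absval_two_power: "N ((2::'a) ^ m) = 2 powr - real m"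
  by (simp add: power absval_two power_one_over powr_minus powr_realpow inverse_eq_divide)

lemma absval_quadratic_factor:
  assumes "N w < 2"
  shows "N (9/2 - 6 * w + 2 * w^2) = 2"
proof -
  have "N (- 6 * w) = N w / 2"
    using mult[of "- 2 * 3" w] mult[of "-2" 3] minus[of 2] absval_two absval_three by simp
  moreover have "N (2 * w^2) = N w ^ 2 / 2"
    by (simp add: mult power absval_two)
  moreover have "N w ^ 2 < 2 ^ 2"
    using assms nonarch_absval_nonneg[OF nonarch, of w] by (intro power_strict_mono) auto
  ultimately have "N (- 6 * w + 2 * w^2) < 2"
    using add_le[of "- 6 * w" "2 * w^2"] assms by simp
  moreover have "N (9/2 :: 'a) = 2"
    using mult[of 9 "1/2"] mult[of 3 3] absval_three absval_half by simp
  ultimately show ?thesis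
    using add_eq_right[of "- 6 * w + 2 * w^2" "9/2"] by (simp add: algebra_simps)
qed

lemma absval_f_map_plus_half:
  assumes "N t = 1" and "N (1 - t) < 2 * N (z + 1/2)" and "N (z + 1/2) < 2"
  shows "N (f_map t z + 1/2) = 4 * N (z + 1/2)"
proof -
  define w where "w = z + 1/2"
  have "N (t * w * (9/2 - 6 * w + 2 * w^2)) = 2 * N w"
    using assms(1,3) absval_quadratic_factor[of w] by (simp add: mult w_def)
  then have "N ((1 - t) + t * w * (9/2 - 6 * w + 2 * w^2)) = 2 * N w"
    using add_eq_right assms(2) by (simp add: w_def)
  moreover have "N (3/2 :: 'a) = 2"
    using mult[of 3 "1/2"] absval_three absval_half by simp
  moreover have "N (f_map t z + 1/2) = N (3/2) * N ((1 - t) + t * w * (9/2 - 6 * w + 2 * w^2))"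
    unfolding f_map_plus_half_eq[OF two_neq_zero] w_def by (rule mult)
  ultimately show ?thesis
    by (simp add: w_def)
qed

end

theorem lemma1:
  fixes N :: "'a::field \<Rightarrow> real" and n :: nat and t z :: 'a and k :: real
  assumes "C2_like N"
    and "n \<ge> 1"
    and "N (t - (1 + 2 ^ (2 * n - 1))) \<le> 2 powr (- real (2 * n))"
    and "- real (2 * n) < k" and "k < 1"
    and "N (z + 1/2) = 2 powr k"
  shows "N (f_map t z + 1/2) = 2 powr (k + 2)"
proof -
  interpret two_adic_absval N
    using assms(1) unfolding C2_like_def by unfold_locales auto
  have Nd: "N ((2::'a) ^ (2 * n - 1)) = 2 powr (1 - 2 * real n)"
    using assms(2) by (simp add: absval_two_power of_nat_diff)
  have "(2::real) powr (- real (2 * n)) < 2 powr (1 - 2 * real n)"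
    by simp
  then have close: "N (t - (1 + 2 ^ (2 * n - 1))) < N ((2::'a) ^ (2 * n - 1))"
    using assms(3) Nd by linarith
  have small: "N ((2::'a) ^ (2 * n - 1)) < 1"
    using assms(2) Nd by (simp add: powr_less_one)
  have "N (1 - t) = 2 powr (1 - 2 * real n)" and "N t = 1"
    using nonarch_absval_near_one[OF nonarch close small] Nd by simp_all
  moreover have "2 powr (1 - 2 * real n) < 2 powr (k + 1)"
    using assms(4) by (intro powr_less_mono) auto
  moreover have "2 powr k < (2 powr 1 :: real)"
    using assms(5) by (intro powr_less_mono) auto
  moreover have "2 powr (k + 1) = 2 * 2 powr k" and "2 powr (k + 2) = 4 * 2 powr k"
    by (simp_all add: powr_add)
  ultimately show ?thesis
    using absval_f_map_plus_half[of t z] assms(6) by simp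
qed

end
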